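(* Let $\mathcal{T}$ be a triangulation of $C(m,2d+1)$ with a mutable $d$-simplex $A\in\operatorname{simp}(\mathcal{T})$ which is replaced by the $(d+1)$-simplex $B=(b_0,\dots,b_{d+1})$ in the increasing flip. Then $B'=(b_1,b_2,\dots,b_d)$ is the unique support of $A$ with respect to $\operatorname{simp}(\mathcal{T})$.
   Context: $C(V,n)$ is the cyclic polytope on a finite ordered set $V$ (convex hull of $(t_v,\dots,t_v^n)$, $t_v$ increasing); a triangulation is a set of $(n+1)$-subsets of $V$ whose geometric simplices form a simplicial complex covering $C(V,n)$; its simplices include all faces (subsets) of its members. A $k$-simplex is a $(k+1)$-subset, always written in increasing order $A=(a_0,a_1,\dots)$. An $n$-subset $F\subseteq V$ is a lower (upper) facet of $C(V,n)$ iff every $w\in V\setminus F$ has an even (odd) number of elements of $F$ greater than it. A $d$-simplex $A\subseteq[m]$ is internal for $C(m,2d+1)$ if it lies in no facet of $C(m,2d+1)$; equivalently $a_{i+1}\geq a_i+2$ for all $i$, $a_d\leq a_0+m-2$, $a_0\neq 1$, $a_d\neq m$ (the set of these is denoted $\nu_{m,d}$ here). $\operatorname{simp}(\mathcal{T})$ is the set of internal $d$-simplices that are faces of simplices of $\mathcal{T}$. For a $d$-subset $\Sigma$ (size $d$) and a $(d+1)$-subset $A$, write $\Sigma\wr A$ if $a_0<\sigma_0<a_1<\dots<\sigma_{d-1}<a_d$; for a $(d+1)$-subset $A$ and a $(d+2)$-subset $B$, write $A\wr B$ if $b_0<a_0<b_1<\dots<a_d<b_{d+1}$. For $|U|=2d+3$,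 $C(U,2d+1)$ has two triangulations, the lower one (lower facets of $C(U,2d+2)$) and the upper one (upper facets). $A\in\operatorname{simp}(\mathcal{T})$ is a mutable $d$-simplex replaced by the $(d+1)$-simplex $B$ if $A\wr B$, $C(A\cup B,2d+1)$ is a subpolytope of $\mathcal{T}$ (i.e. $\{S\in\mathcal{T}:S\subseteq A\cup B\}$ triangulates it), and the induced triangulation is the lower one; the increasing flip replaces it by the upper triangulation. For $\mathbf{X}\subseteq\nu_{m,d}$ and $A\in\mathbf{X}$, a $(d-1)$-simplex $\Sigma$ (a $d$-subset) is a support for $A$ if $\Sigma\wr A$ and every $C\in\nu_{m,d}$ with $C\subseteq A\cup\Sigma$ lies in $\mathbf{X}$. *)

theory Defs
  imports Complex_Main
begin

text \<open>Points of R^n are represented as functions nat => real (coordinates 1..n used,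
 all others 0). The moment-curve point of vertex v is (t v, t v^2, ..., t v^n).\<close>

definition mpt :: "(nat \<Rightarrow> real) \<Rightarrow> nat \<Rightarrow> nat \<Rightarrow> (nat \<Rightarrow> real)" where
  "mpt t n v = (\<lambda>i. if 1 \<le> i \<and> i \<le> n then t v ^ i else 0)"

definition cconv :: "(nat \<Rightarrow> real) \<Rightarrow> nat \<Rightarrow> nat set \<Rightarrow> (nat \<Rightarrow> real) set" where
  "cconv t n X = {x. \<exists>u. (\<forall>v\<in>X. 0 \<le> u v) \<and> (\<Sum>v\<in>X. u v) = 1 \<and>
                        x = (\<lambda>i. \<Sum>v\<in>X. u v * mpt t n v i)}"

definition triangulation :: "(nat \<Rightarrow> real) \<Rightarrow> nat \<Rightarrow> nat set \<Rightarrow> nat set set \<Rightarrow> bool" where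
  "triangulation t n V T \<longleftrightarrow>
     finite V \<and>
     (\<forall>S\<in>T. S \<subseteq> V \<and> card S = n + 1) \<and>
     (\<forall>S\<in>T. \<forall>S'\<in>T. cconv t n S \<inter> cconv t n S' = cconv t n (S \<inter> S')) \<and>
     (\<Union>S\<in>T. cconv t n S) = cconv t n V"

definition lower_facet :: "nat \<Rightarrow> nat set \<Rightarrow> nat set \<Rightarrow> bool" where
  "lower_facet n V F \<longleftrightarrow> F \<subseteq> V \<and> card F = n \<and>
     (\<forall>w\<in>V - F. even (card {f\<in>F. w < f}))"

definition upper_facet :: "nat \<Rightarrow> nat set \<Rightarrow> nat set \<Rightarrow> bool" where
  "upper_facet n V F \<longleftrightarrow> F \<subseteq> V \<and> card F = n \<and>
     (\<forall>w\<in>V - F. odd (card {f\<in>F. w < f}))"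

definition lower_triang :: "nat \<Rightarrow> nat set \<Rightarrow> nat set set" where
  "lower_triang n U = {S. lower_facet (n + 1) U S}"

definition nu :: "nat \<Rightarrow> nat \<Rightarrow> nat set set" where
  "nu m d = {A. A \<subseteq> {1..m} \<and> card A = d + 1 \<and>
     \<not> (\<exists>F. (lower_facet (2*d+1) {1..m} F \<or> upper_facet (2*d+1) {1..m} F) \<and> A \<subseteq> F)}"

definition simp_of :: "nat \<Rightarrow> nat \<Rightarrow> nat set set \<Rightarrow> nat set set" where
  "simp_of m d T = {A \<in> nu m d. \<exists>S\<in>T. A \<subseteq> S}"

definition wr :: "nat set \<Rightarrow> nat set \<Rightarrow> bool" where
  "wr X Y \<longleftrightarrow> finite X \<and> finite Y \<and> card Y = card X + 1 \<and>
     (\<forall>i < card X. sorted_list_of_set Y ! i < sorted_list_of_set X ! i \<and>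
                    sorted_list_of_set X ! i < sorted_list_of_set Y ! (i + 1))"

definition mutable :: "(nat \<Rightarrow> real) \<Rightarrow> nat \<Rightarrow> nat \<Rightarrow> nat set set \<Rightarrow> nat set \<Rightarrow> nat set \<Rightarrow> bool" where
  "mutable t m d T A B \<longleftrightarrow>
     A \<in> simp_of m d T \<and> B \<subseteq> {1..m} \<and> card B = d + 2 \<and> wr A B \<and>
     triangulation t (2*d+1) (A \<union> B) {S\<in>T. S \<subseteq> A \<union> B} \<and>
     {S\<in>T. S \<subseteq> A \<union> B} = lower_triang (2*d+1) (A \<union> B)"

definition is_support :: "nat \<Rightarrow> nat \<Rightarrow> nat set set \<Rightarrow> nat set \<Rightarrow> nat set \<Rightarrow> bool" where
  "is_support m d X A \<Sigma> \<longleftrightarrow> card \<Sigma> = d \<and> wr \<Sigma> A \<and>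
     (\<forall>C\<in>nu m d. C \<subseteq> A \<union> \<Sigma> \<longrightarrow> C \<in> X)"

end

theory Submission
  imports Defs "HOL-Computational_Algebra.Polynomial"
begin

(*
  Write the vertices of A \<union> B as u_0 < u_1 < ... < u_{2d+2}, with b_j = u_{2j} and
  a_j = u_{2j+1}. The lower triangulation of C(A \<union> B, 2d+1) consists of the simplices
  (A \<union> B) - {b_j}, so A \<union> B' lies in the simplex (A \<union> B) - {b_0} of T and B' is a support.

  Conversely, let \<Sigma> be a support with an entry \<sigma>_i \<noteq> b_{i+1}, say a_i < \<sigma>_i < b_{i+1}
  (the case b_{i+1} < \<sigma>_i < a_{i+1} is symmetric, with b_{i+2} in place of b_i). Deleting
  b_i from u and inserting \<sigma>_i gives an increasing sequence w_0 < ... < w_{2d+2} whose odd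
  entries lie in A \<union> \<Sigma> and whose even entries lie in the simplex (A \<union> B) - {b_i}.
  The odd entries are separated by gaps, hence form an internal d-simplex, which lies in
  simp(T) because \<Sigma> is a support, i.e. in some simplex S of T. But on the moment curve the
  odd and the even entries of such a sequence form a Radon partition: the divided
  differences of t^0, ..., t^{2d+1} at 2d+3 nodes vanish. So the two simplices of T meet in
  the relative interiors of these faces, which forces S to contain all 2d+3 points.
*)

section \<open>Points on the moment curve\<close>

lemma power_sums_eq_0_imp_eq_0:
  fixes \<tau> \<mu> :: "nat \<Rightarrow> real"
  assumes fin: "finite S" and inj: "inj_on \<tau> S" and card: "card S \<le> n + 1"
    and sums: "\<And>i. i \<le> n \<Longrightarrow> (\<Sum>u\<in>S. \<mu> u * \<tau> u ^ i) = 0"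
    and v: "v \<in> S"
  shows "\<mu> v = 0"
proof -
  define p where "p = (\<Prod>w\<in>S-{v}. [:-\<tau> w, 1:])"
  have "degree p = card (S - {v})"
    unfolding p_def by (subst degree_prod_eq_sum_degree) auto
  then have deg: "degree p \<le> n" using card fin v by (simp add: card_Diff_singleton)
  have "(\<Sum>u\<in>S. \<mu> u * poly p (\<tau> u)) = (\<Sum>u\<in>S. \<Sum>k\<le>degree p. coeff p k * (\<mu> u * \<tau> u ^ k))"
    by (simp add: poly_altdef sum_distrib_left algebra_simps)
  also have "\<dots> = (\<Sum>k\<le>degree p. coeff p k * (\<Sum>u\<in>S. \<mu> u * \<tau> u ^ k))"
    by (subst sum.swap) (simp add: sum_distrib_left)
  also have "\<dots> = 0" using deg sums by (intro sum.neutral) auto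
  finally have "(\<Sum>u\<in>S. \<mu> u * poly p (\<tau> u)) = 0" .
  moreover have "(\<Sum>u\<in>S. \<mu> u * poly p (\<tau> u)) = \<mu> v * poly p (\<tau> v)"
    using fin v by (subst sum.remove[OF fin v]) (auto simp: p_def poly_prod intro!: sum.neutral)
  moreover have "poly p (\<tau> v) \<noteq> 0"
    unfolding p_def poly_prod using fin inj v by (auto simp: inj_on_def)
  ultimately show ?thesis by simp
qed

text \<open>The left-hand side is the leading coefficient of the Lagrange interpolant of \<open>x ^ i\<close> at
  the nodes \<open>\<tau> 0, \<dots>, \<tau> (N - 1)\<close>, which is \<open>x ^ i\<close> itself and has degree below \<open>N - 1\<close>.\<close>
lemma divided_difference_power_eq_0:
  fixes \<tau> :: "nat \<Rightarrow> real"
  assumes inj: "inj_on \<tau> {..<N}" and iN: "i + 2 \<le> N"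
  shows "(\<Sum>k<N. \<tau> k ^ i / (\<Prod>j\<in>{..<N}-{k}. \<tau> k - \<tau> j)) = 0"
proof -
  define L where "L k = (\<Prod>j\<in>{..<N}-{k}. [:-\<tau> j, 1:])" for k
  define P where "P k = (\<Prod>j\<in>{..<N}-{k}. \<tau> k - \<tau> j)" for k
  define Q where "Q = (\<Sum>k<N. smult (\<tau> k ^ i / P k) (L k)) - monom 1 i"
  have degL: "degree (L k) = N - 1" if "k < N" for k
    unfolding L_def using that by (subst degree_prod_eq_sum_degree) auto
  have coeffL: "coeff (L k) (N - 1) = 1" if "k < N" for k
  proof -
    have "coeff (L k) (N - 1) = lead_coeff (L k)" using degL[OF that] by simp
    also have "\<dots> = 1" unfolding L_def lead_coeff_prod by simp
    finally show ?thesis .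
  qed
  have P_nonzero: "P k \<noteq> 0" if "k < N" for k
    using inj that by (auto simp: P_def inj_on_def)
  have polyL: "poly (L k) (\<tau> l) = (if l = k then P k else 0)" if "k < N" "l < N" for k l
  proof (cases "l = k")
    case False
    then have "l \<in> {..<N}-{k}" using that by auto
    then show ?thesis unfolding L_def poly_prod using False by (auto simp: prod_zero_iff intro!: bexI[of _ l])
  qed (simp add: L_def P_def poly_prod)
  have roots: "poly Q (\<tau> l) = 0" if "l < N" for l
  proof -
    have "(\<Sum>k<N. \<tau> k ^ i / P k * poly (L k) (\<tau> l)) = \<tau> l ^ i / P l * P l"
      using that polyL by (subst sum.remove[of _ l]) (auto intro!: sum.neutral)
    then show ?thesis using P_nonzero[OF that] by (simp add: Q_def poly_sum poly_monom)
  qed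
  have "degree Q \<le> N - 1"
    unfolding Q_def using iN
    by (intro degree_diff_le degree_sum_le order.trans[OF degree_smult_le])
       (auto simp: degL degree_monom_eq)
  moreover have "Q = 0"
  proof (rule ccontr)
    assume "Q \<noteq> 0"
    have "\<tau> ` {..<N} \<subseteq> {x. poly Q x = 0}" using roots by auto
    then have "card (\<tau> ` {..<N}) \<le> card {x. poly Q x = 0}"
      using poly_roots_finite[OF \<open>Q \<noteq> 0\<close>] by (intro card_mono) auto
    also have "\<dots> \<le> degree Q" using \<open>Q \<noteq> 0\<close> by (rule card_poly_roots_bound)
    finally show False using \<open>degree Q \<le> N - 1\<close> iN inj by (simp add: card_image)
  qed
  moreover have "coeff Q (N - 1) = (\<Sum>k<N. \<tau> k ^ i / P k)"
    unfolding Q_def using iN coeffL by (simp add: coeff_sum coeff_monom)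
  ultimately show ?thesis by (simp add: P_def)
qed

lemma node_product_sign:
  fixes \<tau> :: "nat \<Rightarrow> real"
  assumes mono: "\<And>j k. j < k \<Longrightarrow> k < N \<Longrightarrow> \<tau> j < \<tau> k" and k: "k < N"
  shows "(-1) ^ (N - 1 - k) * (\<Prod>j\<in>{..<N}-{k}. \<tau> k - \<tau> j) > 0"
proof -
  have split: "{..<N}-{k} = {..<k} \<union> {k<..<N}" using k by auto
  have "(\<Prod>j\<in>{k<..<N}. \<tau> k - \<tau> j) = (\<Prod>j\<in>{k<..<N}. (-1) * (\<tau> j - \<tau> k))"
    by (intro prod.cong) auto
  also have "\<dots> = (-1) ^ (N - 1 - k) * (\<Prod>j\<in>{k<..<N}. \<tau> j - \<tau> k)"
    unfolding prod.distrib by simp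
  finally have "(-1) ^ (N - 1 - k) * (\<Prod>j\<in>{..<N}-{k}. \<tau> k - \<tau> j)
      = (\<Prod>j\<in>{..<k}. \<tau> k - \<tau> j) * (\<Prod>j\<in>{k<..<N}. \<tau> j - \<tau> k)"
    unfolding split by (subst prod.union_disjoint) (auto simp flip: power_add)
  also have "\<dots> > 0" using mono k by (intro mult_pos_pos prod_pos) auto
  finally show ?thesis .
qed

lemma moment_curve_alternating_weights:
  fixes \<tau> :: "nat \<Rightarrow> real"
  assumes mono: "strict_mono_on {..n+1} \<tau>"
  obtains \<theta> where "\<And>k. k \<le> n + 1 \<Longrightarrow> 0 < \<theta> k"
    and "\<And>i. i \<le> n \<Longrightarrow> (\<Sum>k\<le>n+1. (-1) ^ k * \<theta> k * \<tau> k ^ i) = 0"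
proof -
  define P where "P k = (\<Prod>j\<in>{..<n+2}-{k}. \<tau> k - \<tau> j)" for k
  define \<theta> where "\<theta> k = (-1) ^ (n + 1 - k) / P k" for k
  have nodes: "{..<n+2} = {..n+1}" by auto
  show thesis
  proof (rule that)
    fix k assume "k \<le> n + 1"
    moreover have "\<tau> j < \<tau> l" if "j < l" "l < n + 2" for j l
      using strict_mono_onD[OF mono] that by auto
    ultimately have "(-1) ^ (n + 1 - k) * P k > 0"
      using node_product_sign[of "n+2" \<tau> k] unfolding P_def by simp
    then show "0 < \<theta> k"
      by (simp add: \<theta>_def zero_less_mult_iff zero_less_divide_iff)
  next
    fix i assume "i \<le> n"
    have "(\<Sum>k\<le>n+1. (-1) ^ k * \<theta> k * \<tau> k ^ i) = (\<Sum>k\<le>n+1. (-1) ^ (n + 1) * (\<tau> k ^ i / P k))"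
      by (rule sum.cong) (simp_all add: \<theta>_def power_add[symmetric])
    also have "\<dots> = (-1) ^ (n + 1) * (\<Sum>k<n+2. \<tau> k ^ i / P k)"
      unfolding sum_distrib_left nodes ..
    also have "(\<Sum>k<n+2. \<tau> k ^ i / P k) = 0"
      using divided_difference_power_eq_0[of \<tau> "n+2" i] \<open>i \<le> n\<close> mono
      unfolding P_def nodes by (simp add: strict_mono_on_imp_inj_on)
    finally show "(\<Sum>k\<le>n+1. (-1) ^ k * \<theta> k * \<tau> k ^ i) = 0" by simp
  qed
qed

lemma moment_curve_radon_partition:
  fixes \<tau> :: "nat \<Rightarrow> real"
  assumes "strict_mono_on {..n+1} \<tau>"
  obtains \<theta> where "\<And>k. k \<le> n + 1 \<Longrightarrow> 0 < \<theta> k"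
    and "(\<Sum>k | k \<le> n + 1 \<and> even k. \<theta> k) = 1"
    and "\<And>i. i \<le> n \<Longrightarrow>
      (\<Sum>k | k \<le> n + 1 \<and> odd k. \<theta> k * \<tau> k ^ i) = (\<Sum>k | k \<le> n + 1 \<and> even k. \<theta> k * \<tau> k ^ i)"
proof -
  obtain \<theta> where pos: "\<And>k. k \<le> n + 1 \<Longrightarrow> 0 < \<theta> k"
    and alt: "\<And>i. i \<le> n \<Longrightarrow> (\<Sum>k\<le>n+1. (-1) ^ k * \<theta> k * \<tau> k ^ i) = 0"
    using moment_curve_alternating_weights[OF assms] by blast
  have split: "(\<Sum>k\<le>n+1. (-1) ^ k * g k)
      = (\<Sum>k | k \<le> n + 1 \<and> even k. g k) - (\<Sum>k | k \<le> n + 1 \<and> odd k. g k)"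
    for g :: "nat \<Rightarrow> real"
  proof -
    have "(\<Sum>k\<le>n+1. (-1) ^ k * g k) = (\<Sum>k\<le>n+1. if even k then g k else - g k)"
      by (rule sum.cong) auto
    also have "\<dots> = (\<Sum>k\<in>{..n+1} \<inter> {k. even k}. g k) - (\<Sum>k\<in>{..n+1} \<inter> - {k. even k}. g k)"
      unfolding sum.If_cases[OF finite_atMost] sum_negf by (rule diff_conv_add_uminus[symmetric])
    also have "{..n+1} \<inter> {k. even k} = {k. k \<le> n + 1 \<and> even k}" by auto
    also have "{..n+1} \<inter> - {k. even k} = {k. k \<le> n + 1 \<and> odd k}" by auto
    finally show ?thesis .
  qed
  define s where "s = (\<Sum>k | k \<le> n + 1 \<and> even k. \<theta> k)"
  have "0 < s" unfolding s_def using pos by (intro sum_pos) auto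
  show thesis
  proof (rule that[of "\<lambda>k. \<theta> k / s"])
    show "0 < \<theta> k / s" if "k \<le> n + 1" for k using pos[OF that] \<open>0 < s\<close> by simp
    show "(\<Sum>k | k \<le> n + 1 \<and> even k. \<theta> k / s) = 1"
      using \<open>0 < s\<close> by (simp add: s_def sum_divide_distrib[symmetric])
    show "(\<Sum>k | k \<le> n + 1 \<and> odd k. \<theta> k / s * \<tau> k ^ i)
        = (\<Sum>k | k \<le> n + 1 \<and> even k. \<theta> k / s * \<tau> k ^ i)" if "i \<le> n" for i
      using alt[OF that] split[of "\<lambda>k. \<theta> k * \<tau> k ^ i"]
      by (simp add: sum_divide_distrib[symmetric] mult.assoc)
  qed
qed

lemma convex_combination_in_cconv:
  assumes "finite S" "Y \<subseteq> S" "\<And>v. v \<in> Y \<Longrightarrow> 0 \<le> \<beta> v" "(\<Sum>v\<in>Y. \<beta> v) = 1"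
  shows "(\<lambda>i. \<Sum>v\<in>Y. \<beta> v * mpt t n v i) \<in> cconv t n S"
proof -
  define u where "u v = (if v \<in> Y then \<beta> v else 0)" for v
  have extend: "(\<Sum>v\<in>S. u v * g v) = (\<Sum>v\<in>Y. \<beta> v * g v)" for g :: "nat \<Rightarrow> real"
    using assms(1,2) by (intro sum.mono_neutral_cong_right) (auto simp: u_def)
  show ?thesis
    unfolding cconv_def using extend[of "\<lambda>_. 1"] extend assms(3,4)
    by (intro CollectI exI[of _ u]) (auto simp: u_def)
qed

text \<open>The point lies in the common face \<open>S \<inter> S'\<close>, and barycentric coordinates with respect to
  the simplex \<open>S\<close> are unique.\<close>
lemma triangulation_positive_combination_subset:
  assumes tri: "triangulation t n V T" and inj: "inj_on t V"
    and S: "S \<in> T" and S': "S' \<in> T" and XS: "X \<subseteq> S"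
    and pos: "\<And>v. v \<in> X \<Longrightarrow> 0 < \<alpha> v" and sum1: "(\<Sum>v\<in>X. \<alpha> v) = 1"
    and p: "(\<lambda>i. \<Sum>v\<in>X. \<alpha> v * mpt t n v i) \<in> cconv t n S'"
  shows "X \<subseteq> S'"
proof
  have SV: "S \<subseteq> V" and card: "card S = n + 1" and "finite V"
    using tri S unfolding triangulation_def by auto
  from SV \<open>finite V\<close> have fin: "finite S" by (rule finite_subset)
  have "(\<lambda>i. \<Sum>v\<in>X. \<alpha> v * mpt t n v i) \<in> cconv t n S"
    using fin XS pos sum1 by (intro convex_combination_in_cconv) (auto intro: less_imp_le)
  with p have "(\<lambda>i. \<Sum>v\<in>X. \<alpha> v * mpt t n v i) \<in> cconv t n (S \<inter> S')"
    using tri S S' unfolding triangulation_def by blast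
  then obtain \<gamma> where \<gamma>_sum1: "(\<Sum>v\<in>S \<inter> S'. \<gamma> v) = 1"
    and \<gamma>_eq: "(\<lambda>i. \<Sum>v\<in>X. \<alpha> v * mpt t n v i) = (\<lambda>i. \<Sum>v\<in>S \<inter> S'. \<gamma> v * mpt t n v i)"
    unfolding cconv_def by blast
  define \<mu> where "\<mu> v = (if v \<in> X then \<alpha> v else 0) - (if v \<in> S' then \<gamma> v else 0)" for v
  have \<mu>_sum: "(\<Sum>v\<in>S. \<mu> v * g v) = (\<Sum>v\<in>X. \<alpha> v * g v) - (\<Sum>v\<in>S \<inter> S'. \<gamma> v * g v)"
    for g :: "nat \<Rightarrow> real"
  proof -
    have "(\<Sum>v\<in>S. (if v \<in> X then \<alpha> v else 0) * g v) = (\<Sum>v\<in>X. \<alpha> v * g v)"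
      using fin XS by (intro sum.mono_neutral_cong_right) auto
    moreover have "(\<Sum>v\<in>S. (if v \<in> S' then \<gamma> v else 0) * g v) = (\<Sum>v\<in>S \<inter> S'. \<gamma> v * g v)"
      using fin by (intro sum.mono_neutral_cong_right) auto
    ultimately show ?thesis by (simp add: \<mu>_def left_diff_distrib sum_subtractf)
  qed
  moreover have "(\<Sum>v\<in>X. \<alpha> v * t v ^ i) = (\<Sum>v\<in>S \<inter> S'. \<gamma> v * t v ^ i)" if "i \<le> n" for i
    using fun_cong[OF \<gamma>_eq, of i] that sum1 \<gamma>_sum1 by (cases "i = 0") (simp_all add: mpt_def)
  ultimately have "(\<Sum>v\<in>S. \<mu> v * t v ^ i) = 0" if "i \<le> n" for i
    using that by simp
  then have \<mu>_zero: "\<mu> v = 0" if "v \<in> S" for v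
    using power_sums_eq_0_imp_eq_0[OF fin inj_on_subset[OF inj SV], of n] card that by simp
  fix v assume "v \<in> X"
  with XS pos[of v] \<mu>_zero[of v] show "v \<in> S'" by (auto simp: \<mu>_def split: if_splits)
qed

text \<open>By Radon's theorem on the moment curve, the odd-indexed and the even-indexed points share a
  point of the relative interiors of their convex hulls; hence \<open>S\<close> contains all \<open>n + 2\<close> points.\<close>
lemma alternating_points_not_in_two_simplices:
  assumes tri: "triangulation t n V T" and t: "strict_mono_on V t"
    and w: "strict_mono_on {..n+1} w" and wV: "w ` {..n+1} \<subseteq> V"
    and S: "S \<in> T" and S': "S' \<in> T"
    and odd_in: "\<And>k. k \<le> n + 1 \<Longrightarrow> odd k \<Longrightarrow> w k \<in> S"
    and even_in: "\<And>k. k \<le> n + 1 \<Longrightarrow> even k \<Longrightarrow> w k \<in> S'"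
  shows False
proof -
  let ?odds = "{k. k \<le> n + 1 \<and> odd k}" and ?evens = "{k. k \<le> n + 1 \<and> even k}"
  have "strict_mono_on {..n+1} (\<lambda>k. t (w k))"
    using wV by (intro strict_mono_onI strict_mono_onD[OF t] strict_mono_onD[OF w]) auto
  then obtain \<theta> where pos: "\<And>k. k \<le> n + 1 \<Longrightarrow> 0 < \<theta> k"
    and sum_evens: "(\<Sum>k\<in>?evens. \<theta> k) = 1"
    and balanced: "\<And>i. i \<le> n \<Longrightarrow> (\<Sum>k\<in>?odds. \<theta> k * t (w k) ^ i) = (\<Sum>k\<in>?evens. \<theta> k * t (w k) ^ i)"
    using moment_curve_radon_partition by blast
  have inj: "inj_on w {..n+1}" using w by (rule strict_mono_on_imp_inj_on)
  have parts: "?odds \<subseteq> {..n+1}" "?evens \<subseteq> {..n+1}" by auto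
  define \<beta> where "\<beta> = \<theta> \<circ> the_inv_into {..n+1} w"
  have reindex: "(\<Sum>v\<in>w ` K. \<beta> v * g v) = (\<Sum>k\<in>K. \<theta> k * g (w k))"
    if "K \<subseteq> {..n+1}" for K and g :: "nat \<Rightarrow> real"
  proof -
    have "inj_on w K" using inj that by (rule inj_on_subset)
    then show ?thesis using that the_inv_into_f_f[OF inj]
      by (auto simp: sum.reindex \<beta>_def intro!: sum.cong)
  qed
  have sums: "(\<Sum>v\<in>w ` ?odds. \<beta> v) = 1" "(\<Sum>v\<in>w ` ?evens. \<beta> v) = 1"
    using reindex[OF parts(1), of "\<lambda>_. 1"] reindex[OF parts(2), of "\<lambda>_. 1"] balanced[of 0] sum_evens
    by simp_all
  have pos_\<beta>: "0 < \<beta> v" if "v \<in> w ` K" "K \<subseteq> {..n+1}" for v K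
    using that pos the_inv_into_f_f[OF inj] by (auto simp: \<beta>_def)
  have same_point: "(\<lambda>i. \<Sum>v\<in>w ` ?odds. \<beta> v * mpt t n v i) = (\<lambda>i. \<Sum>v\<in>w ` ?evens. \<beta> v * mpt t n v i)"
  proof
    fix i
    show "(\<Sum>v\<in>w ` ?odds. \<beta> v * mpt t n v i) = (\<Sum>v\<in>w ` ?evens. \<beta> v * mpt t n v i)"
    proof (cases "1 \<le> i \<and> i \<le> n")
      case True
      then show ?thesis using balanced[of i] reindex[OF parts(1)] reindex[OF parts(2)] by (simp add: mpt_def)
    qed (auto simp: mpt_def)
  qed
  have odds_S: "w ` ?odds \<subseteq> S" and evens_S': "w ` ?evens \<subseteq> S'"
    using odd_in even_in by auto
  have fin: "finite S" and card: "card S = n + 1"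
    using tri S unfolding triangulation_def by (auto intro: finite_subset)
  have "(\<lambda>i. \<Sum>v\<in>w ` ?evens. \<beta> v * mpt t n v i) \<in> cconv t n S"
    unfolding same_point[symmetric] using fin odds_S sums pos_\<beta>[OF _ parts(1)]
    by (intro convex_combination_in_cconv) (auto intro: less_imp_le)
  then have "w ` ?evens \<subseteq> S"
    using sums pos_\<beta>[OF _ parts(2)] strict_mono_on_imp_inj_on[OF t]
    by (intro triangulation_positive_combination_subset[OF tri _ S' S evens_S']) auto
  with odds_S have "w ` {..n+1} \<subseteq> S" by auto
  then have "card (w ` {..n+1}) \<le> card S" using fin by (intro card_mono)
  with inj card show False by (simp add: card_image)
qed

section \<open>Facets and internal simplices\<close>

lemma card_greater_pred:
  assumes "finite F" "x \<in> F" "1 \<le> x"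
  shows "card {f\<in>F. x - 1 < f} = Suc (card {f\<in>F. (x::nat) < f})"
proof -
  have "{f\<in>F. x - 1 < f} = insert x {f\<in>F. x < f}" using assms by auto
  then show ?thesis using assms(1) by simp
qed

lemma card_greater_Suc_notin:
  assumes "x + 1 \<notin> F"
  shows "card {f\<in>F. x < f} = card {f\<in>F. (x::nat) + 1 < f}"
proof -
  have "{f\<in>F. x < f} = {f\<in>F. x + 1 < f}" using assms by (auto intro: Suc_lessI)
  then show ?thesis by simp
qed

text \<open>Each \<open>c \<in> C\<close> is matched with a neighbour \<open>c \<plusminus> 1 \<in> F - C\<close>; the side is chosen by
  the parity of the number of elements of \<open>F\<close> above \<open>c\<close>, which makes the matching injective.\<close>
lemma card_separated_subset_le_half:
  fixes F C :: "nat set"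
  assumes F: "F \<subseteq> {1..m}"
    and parity: "\<And>x. x \<in> {1..m} - F \<Longrightarrow> even (card {f\<in>F. x < f}) = \<pi>"
    and CF: "C \<subseteq> F"
    and sep: "\<And>c. c \<in> C \<Longrightarrow> 1 < c \<and> c < m \<and> c + 1 \<notin> C"
  shows "2 * card C \<le> card F"
proof -
  have finF: "finite F" using F by (rule finite_subset) simp
  define N where "N x = card {f\<in>F. x < f}" for x
  have N_pred: "N (x - 1) = Suc (N x)" if "x \<in> F" "1 \<le> x" for x
    using card_greater_pred[OF finF that] by (simp add: N_def)
  have N_gap: "N x = N (x + 1)" if "x + 1 \<notin> F" for x
    using card_greater_Suc_notin[OF that] by (simp add: N_def)
  define \<phi> where "\<phi> c = (if even (N c) = \<pi> then c - 1 else c + 1)" for c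
  have \<phi>_mem: "\<phi> c \<in> F - C" if "c \<in> C" for c
  proof (cases "even (N c) = \<pi>")
    case True
    have "c - 1 \<in> F"
    proof (rule ccontr)
      assume "c - 1 \<notin> F"
      then have "c - 1 \<in> {1..m} - F" using sep[OF that] by auto
      then have "even (N (c - 1)) = \<pi>" using parity by (simp add: N_def)
      with True N_pred[of c] that CF sep[OF that] show False by auto
    qed
    moreover have "c - 1 \<notin> C" using sep[of "c - 1"] sep[OF that] that by auto
    ultimately show ?thesis using True by (simp add: \<phi>_def)
  next
    case False
    have "c + 1 \<in> F"
    proof (rule ccontr)
      assume "c + 1 \<notin> F"
      then have "c + 1 \<in> {1..m} - F" using sep[OF that] by auto
      then have "even (N (c + 1)) = \<pi>" using parity by (simp add: N_def)
      with False N_gap[of c] \<open>c + 1 \<notin> F\<close> show False by simp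
    qed
    then show ?thesis using False sep[OF that] by (simp add: \<phi>_def)
  qed
  have "strict_mono_on C \<phi>"
  proof (rule strict_mono_onI)
    fix c c' assume c: "c \<in> C" "c' \<in> C" "c < c'"
    then have "c + 2 \<le> c'" using sep[of c] by (cases "c' = c + 1") auto
    moreover have "\<phi> c \<le> c + 1" "c' - 1 \<le> \<phi> c'" by (auto simp: \<phi>_def)
    moreover have "\<phi> c \<noteq> \<phi> c'" if "c' = c + 2"
    proof
      assume "\<phi> c = \<phi> c'"
      with that have "\<phi> c = c + 1" "\<phi> c' = c' - 1" using sep[OF c(1)] by (auto simp: \<phi>_def split: if_splits)
      then have "c + 1 \<in> F" "c + 2 \<in> F" using \<phi>_mem[OF c(1)] CF c(2) that by auto
      then have "N c = Suc (Suc (N (c + 2)))" using N_pred[of "c + 1"] N_pred[of "c + 2"] by simp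
      with \<open>\<phi> c = c + 1\<close> \<open>\<phi> c' = c' - 1\<close> that show False by (auto simp: \<phi>_def split: if_splits)
    qed
    ultimately show "\<phi> c < \<phi> c'" by fastforce
  qed
  then have "card C \<le> card (F - C)"
    using \<phi>_mem finF by (intro card_inj_on_le[of \<phi>] strict_mono_on_imp_inj_on) auto
  also have "\<dots> = card F - card C" using CF finF by (simp add: card_Diff_subset finite_subset)
  finally show ?thesis by simp
qed

lemma separated_set_in_nu:
  assumes card: "card C = d + 1" and sep: "\<And>c. c \<in> C \<Longrightarrow> 1 < c \<and> c < m \<and> c + 1 \<notin> C"
  shows "C \<in> nu m d"
proof -
  have "False" if F: "lower_facet (2*d+1) {1..m} F \<or> upper_facet (2*d+1) {1..m} F" and "C \<subseteq> F" for F
  proof -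
    obtain \<pi> where "\<And>x. x \<in> {1..m} - F \<Longrightarrow> even (card {f\<in>F. x < f}) = \<pi>"
      using F unfolding lower_facet_def upper_facet_def by blast
    then have "2 * card C \<le> card F"
      using F \<open>C \<subseteq> F\<close> sep unfolding lower_facet_def upper_facet_def
      by (intro card_separated_subset_le_half[of F m]) auto
    then show False using F card unfolding lower_facet_def upper_facet_def by auto
  qed
  moreover have "C \<subseteq> {1..m}" using sep by force
  ultimately show ?thesis using card unfolding nu_def by blast
qed

lemma odd_entries_in_nu:
  assumes w: "strict_mono_on {..2*d+2} w" and range: "w ` {..2*d+2} \<subseteq> {1..m}"
  shows "(\<lambda>j. w (2*j+1)) ` {..d} \<in> nu m d"
proof (rule separated_set_in_nu)
  have "inj_on (\<lambda>j. w (2*j+1)) {..d}"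
  proof (rule inj_onI)
    fix j j' assume "j \<in> {..d}" "j' \<in> {..d}" "w (2*j+1) = w (2*j'+1)"
    then show "j = j'" using strict_mono_on_eqD[OF w, of "2*j+1" "2*j'+1"] by auto
  qed
  then show "card ((\<lambda>j. w (2*j+1)) ` {..d}) = d + 1" by (simp add: card_image)
next
  have less: "w k < w l \<longleftrightarrow> k < l" if "k \<le> 2*d+2" "l \<le> 2*d+2" for k l
    using strict_mono_on_less[OF w] that by simp
  fix c assume "c \<in> (\<lambda>j. w (2*j+1)) ` {..d}"
  then obtain j where j: "j \<le> d" "c = w (2*j+1)" by blast
  have "1 \<le> w (2*j)" "w (2*j+2) \<le> m" using range j unfolding image_subset_iff by auto
  moreover have "w (2*j) < c" "c < w (2*j+2)" using less j by auto
  moreover have "c + 1 \<notin> (\<lambda>j. w (2*j+1)) ` {..d}"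
  proof
    assume "c + 1 \<in> (\<lambda>j. w (2*j+1)) ` {..d}"
    then obtain j' where "j' \<le> d" "c + 1 = w (2*j'+1)" by blast
    then show False
      using less[of "2*j'+1" "2*j+1"] less[of "2*j+2" "2*j'+1"] \<open>c < w (2*j+2)\<close> j
      by (cases "j' \<le> j") auto
  qed
  ultimately show "1 < c \<and> c < m \<and> c + 1 \<notin> (\<lambda>j. w (2*j+1)) ` {..d}" by auto
qed

lemma lower_facet_delete_vertex:
  assumes u: "strict_mono_on {..n} u" and k: "k \<le> n" "even (n - k)"
  shows "lower_facet n (u ` {..n}) (u ` {..n} - {u k})"
proof -
  have inj: "inj_on u {..n}" using u by (rule strict_mono_on_imp_inj_on)
  have "{f \<in> u ` {..n} - {u k}. u k < f} = u ` {k<..n}"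
    using k strict_mono_on_less[OF u] strict_mono_on_eq[OF u] by auto
  moreover have "inj_on u {k<..n}" using inj by (rule inj_on_subset) auto
  then have "card (u ` {k<..n}) = n - k" by (simp add: card_image)
  moreover have "card (u ` {..n} - {u k}) = n"
    using inj k by (simp add: card_image)
  ultimately show ?thesis using k unfolding lower_facet_def by auto
qed

section \<open>Interlacing sets\<close>

lemma strict_mono_on_atMostI:
  fixes w :: "nat \<Rightarrow> 'a::order"
  assumes step: "\<And>k. k < n \<Longrightarrow> w k < w (Suc k)"
  shows "strict_mono_on {..n} w"
proof (rule strict_mono_onI)
  fix r s :: nat
  assume "r \<in> {..n}" "s \<in> {..n}" "r < s"
  then show "w r < w s"
  proof (induction s)
    case (Suc s)
    then have "w s < w (Suc s)" using step by simp
    with Suc show ?case by (cases "r = s") (auto dest: order.strict_trans)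
  qed simp
qed

lemma sorted_list_of_set_image_strict_mono:
  assumes "strict_mono_on {..<n} f"
  shows "sorted_list_of_set (f ` {..<n}) = map f [0..<n]"
proof -
  have "sorted_wrt (<) (map f [0..<n])"
    using assms by (auto simp: sorted_wrt_iff_nth_less intro: strict_mono_onD)
  then have "sorted_list_of_set (set (map f [0..<n])) = map f [0..<n]"
    unfolding sorted_list_of_set_sort_remdups by (simp add: strict_sorted_iff distinct_remdups_id sorted_sort_id)
  then show ?thesis by (simp add: atLeast0LessThan)
qed

lemma image_nth_sorted_list_of_set:
  assumes "finite X"
  shows "(\<lambda>k. sorted_list_of_set X ! k) ` {..<card X} = X"
proof -
  have "(\<lambda>k. sorted_list_of_set X ! k) ` {..<card X} = set (sorted_list_of_set X)"
    using assms by (auto simp: set_conv_nth)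
  then show ?thesis using assms by simp
qed

lemma wr_odd_even_entries:
  fixes w :: "nat \<Rightarrow> nat"
  assumes w: "strict_mono_on {..2*k} w"
  shows "wr ((\<lambda>j. w (2*j+1)) ` {..<k}) ((\<lambda>j. w (2*j)) ` {..k})"
proof -
  have less: "w a < w b" if "a < b" "b \<le> 2*k" for a b
    using strict_mono_onD[OF w] that by simp
  have mono: "strict_mono_on {..<k} (\<lambda>j. w (2*j+1))" "strict_mono_on {..<Suc k} (\<lambda>j. w (2*j))"
    by (auto intro!: strict_mono_onI less)
  then have sorted: "sorted_list_of_set ((\<lambda>j. w (2*j+1)) ` {..<k}) = map (\<lambda>j. w (2*j+1)) [0..<k]"
    "sorted_list_of_set ((\<lambda>j. w (2*j)) ` {..k}) = map (\<lambda>j. w (2*j)) [0..<Suc k]"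
    by (simp_all add: sorted_list_of_set_image_strict_mono lessThan_Suc_atMost[symmetric])
  have "card ((\<lambda>j. w (2*j+1)) ` {..<k}) = k" "card ((\<lambda>j. w (2*j)) ` {..k}) = Suc k"
    using mono[THEN strict_mono_on_imp_inj_on]
    by (simp_all add: card_image lessThan_Suc_atMost)
  with sorted show ?thesis
    unfolding wr_def by (auto simp: nth_append less simp del: upt_Suc)
qed

definition interleave :: "nat set \<Rightarrow> nat set \<Rightarrow> nat \<Rightarrow> nat" where
  "interleave X Y k = sorted_list_of_set (if even k then Y else X) ! (k div 2)"

lemma strict_mono_interleave:
  assumes "wr X Y"
  shows "strict_mono_on {..2 * card X} (interleave X Y)"
proof (rule strict_mono_on_atMostI)
  fix k assume "k < 2 * card X"
  then show "interleave X Y k < interleave X Y (Suc k)"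
    using assms unfolding wr_def interleave_def
    by (cases "even k") (auto elim!: evenE oddE)
qed

section \<open>The increasing flip\<close>

locale increasing_flip =
  fixes t :: "nat \<Rightarrow> real" and m d :: nat and T :: "nat set set" and A B :: "nat set"
  assumes t_mono: "strict_mono_on {1..m} t"
    and triangulation: "triangulation t (2*d+1) {1..m} T"
    and mutable: "mutable t m d T A B"
begin

abbreviation u :: "nat \<Rightarrow> nat" where "u \<equiv> interleave A B"

lemma A_in_nu: "A \<in> nu m d" and B_range: "B \<subseteq> {1..m}" and card_B: "card B = d + 2"
  and wr_A_B: "wr A B"
  and lower_simplices: "{S\<in>T. S \<subseteq> A \<union> B} = lower_triang (2*d+1) (A \<union> B)"
  using mutable unfolding mutable_def simp_of_def by auto

lemma card_A: "card A = d + 1"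
  using A_in_nu unfolding nu_def by simp

lemma finite_A: "finite A"
  using card_A by (intro card_ge_0_finite) simp

lemma finite_B: "finite B"
  using B_range by (rule finite_subset) simp

lemma u_strict_mono: "strict_mono_on {..2*d+2} u"
  using strict_mono_interleave[OF wr_A_B] by (simp add: card_A)

lemma u_less: "u k < u l" if "k < l" "l \<le> 2*d+2"
  using strict_mono_onD[OF u_strict_mono] that by simp

lemma u_eq_iff: "u k = u l \<longleftrightarrow> k = l" if "k \<le> 2*d+2" "l \<le> 2*d+2"
  using strict_mono_on_eq[OF u_strict_mono] that by simp

text \<open>Oriented towards \<open>A\<close> and \<open>B\<close>: the other direction loops, as \<open>u\<close> itself
  mentions \<open>A\<close> and \<open>B\<close>.\<close>

lemma odd_entries_eq_A: "(\<lambda>j. u (2*j+1)) ` {..d} = A"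
  using image_nth_sorted_list_of_set[OF finite_A] card_A
  by (simp add: interleave_def lessThan_Suc_atMost)

lemma even_entries_eq_B: "(\<lambda>j. u (2*j)) ` {..d+1} = B"
  using image_nth_sorted_list_of_set[OF finite_B] card_B
  by (simp add: interleave_def lessThan_Suc_atMost)

lemma mem_A: "x \<in> A \<longleftrightarrow> (\<exists>j\<le>d. x = u (2*j+1))"
proof -
  have "x \<in> (\<lambda>j. u (2*j+1)) ` {..d} \<longleftrightarrow> (\<exists>j\<le>d. x = u (2*j+1))" by auto
  then show ?thesis by (simp only: odd_entries_eq_A)
qed

lemma mem_B: "x \<in> B \<longleftrightarrow> (\<exists>j\<le>d+1. x = u (2*j))"
proof -
  have "x \<in> (\<lambda>j. u (2*j)) ` {..d+1} \<longleftrightarrow> (\<exists>j\<le>d+1. x = u (2*j))" by auto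
  then show ?thesis by (simp only: even_entries_eq_B)
qed

lemma u_odd_in_A: "u k \<in> A" if "odd k" "k \<le> 2*d+2"
proof -
  from \<open>odd k\<close> obtain j where "k = 2*j+1" by (blast elim: oddE)
  with that show ?thesis unfolding mem_A by (intro exI[of _ j]) simp
qed

lemma u_even_in_B: "u k \<in> B" if "even k" "k \<le> 2*d+2"
proof -
  from \<open>even k\<close> obtain j where "k = 2*j" by blast
  with that show ?thesis unfolding mem_B by (intro exI[of _ j]) simp
qed

lemma A_union_B: "A \<union> B = u ` {..2*d+2}"
proof
  show "u ` {..2*d+2} \<subseteq> A \<union> B"
    using u_odd_in_A u_even_in_B by blast
qed (auto simp: mem_A mem_B)

lemma u_range: "u k \<in> {1..m}" if "k \<le> 2*d+2"
proof -
  have "A \<subseteq> {1..m}" using A_in_nu unfolding nu_def by simp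
  then show ?thesis using B_range A_union_B that by blast
qed

lemma facet_in_T: "u ` {..2*d+2} - {u (2*j)} \<in> T" if "j \<le> d + 1"
proof -
  have "lower_facet (2*d+1+1) (u ` {..2*d+2}) (u ` {..2*d+2} - {u (2*j)})"
    using lower_facet_delete_vertex[OF u_strict_mono, of "2*j"] that by simp
  then have "u ` {..2*d+2} - {u (2*j)} \<in> {S\<in>T. S \<subseteq> A \<union> B}"
    unfolding lower_simplices by (simp add: lower_triang_def A_union_B)
  then show ?thesis by simp
qed

lemma Min_B: "Min B = u 0"
proof (rule Min_eqI[OF finite_B])
  show "u 0 \<in> B" by (rule u_even_in_B) simp_all
next
  fix y assume "y \<in> B"
  then obtain j where "j \<le> d + 1" "y = u (2*j)" unfolding mem_B by blast
  then show "u 0 \<le> y" using u_less[of 0 "2*j"] by (cases j) auto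
qed

lemma Max_B: "Max B = u (2*d+2)"
proof (rule Max_eqI[OF finite_B])
  show "u (2*d+2) \<in> B" by (rule u_even_in_B) simp_all
next
  fix y assume "y \<in> B"
  then obtain j where "j \<le> d + 1" "y = u (2*j)" unfolding mem_B by blast
  then show "y \<le> u (2*d+2)" using u_less[of "2*j" "2*d+2"] by (cases "j = d + 1") auto
qed

lemma B_without_Min_Max: "B - {Min B, Max B} = (\<lambda>i. u (2*i+2)) ` {..<d}"
  unfolding Min_B Max_B
proof
  show "B - {u 0, u (2*d+2)} \<subseteq> (\<lambda>i. u (2*i+2)) ` {..<d}"
  proof
    fix x assume x: "x \<in> B - {u 0, u (2*d+2)}"
    then have "x \<in> B" by simp
    then obtain j where j: "j \<le> d + 1" "x = u (2*j)" unfolding mem_B by blast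
    have "j \<noteq> 0" "j \<noteq> d + 1" using x j by (intro notI, simp)+
    then obtain i where "j = Suc i" "i < d" using j by (cases j) auto
    with j show "x \<in> (\<lambda>i. u (2*i+2)) ` {..<d}" by auto
  qed
  show "(\<lambda>i. u (2*i+2)) ` {..<d} \<subseteq> B - {u 0, u (2*d+2)}"
  proof
    fix x assume "x \<in> (\<lambda>i. u (2*i+2)) ` {..<d}"
    then obtain i where i: "i < d" "x = u (2*i+2)" by blast
    then have "x \<in> B" using u_even_in_B[of "2*i+2"] by simp
    moreover have "x \<noteq> u 0" "x \<noteq> u (2*d+2)" using i u_eq_iff by auto
    ultimately show "x \<in> B - {u 0, u (2*d+2)}" by simp
  qed
qed

lemma flip_support: "is_support m d (simp_of m d T) A ((\<lambda>i. u (2*i+2)) ` {..<d})"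
proof -
  have "strict_mono_on {..2*d} (\<lambda>k. u (Suc k))"
    by (intro strict_mono_onI strict_mono_onD[OF u_strict_mono]) auto
  from wr_odd_even_entries[OF this]
  have wr: "wr ((\<lambda>i. u (2*i+2)) ` {..<d}) A"
    using odd_entries_eq_A by simp
  then have "card ((\<lambda>i. u (2*i+2)) ` {..<d}) = d"
    using card_A unfolding wr_def by simp
  moreover have in_facet: "A \<union> (\<lambda>i. u (2*i+2)) ` {..<d} \<subseteq> u ` {..2*d+2} - {u (2*0)}"
  proof
    fix x assume "x \<in> A \<union> (\<lambda>i. u (2*i+2)) ` {..<d}"
    then obtain k where k: "0 < k" "k \<le> 2*d+2" "x = u k"
    proof
      assume "x \<in> A"
      then obtain j where "j \<le> d" "x = u (2*j+1)" unfolding mem_A by blast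
      then show thesis using that[of "2*j+1"] by simp
    next
      assume "x \<in> (\<lambda>i. u (2*i+2)) ` {..<d}"
      then obtain i where "i < d" "x = u (2*i+2)" by blast
      then show thesis using that[of "2*i+2"] by simp
    qed
    then show "x \<in> u ` {..2*d+2} - {u (2*0)}" using u_less[of 0 k] by auto
  qed
  have "C \<in> simp_of m d T" if "C \<in> nu m d" "C \<subseteq> A \<union> (\<lambda>i. u (2*i+2)) ` {..<d}" for C
  proof -
    have "C \<subseteq> u ` {..2*d+2} - {u (2*0)}" using that(2) in_facet by (rule subset_trans)
    then show ?thesis using that(1) facet_in_T[of 0] unfolding simp_of_def by auto
  qed
  ultimately show ?thesis using wr unfolding is_support_def by simp
qed

lemma support_excludes_alternating:
  assumes supp: "is_support m d (simp_of m d T) A \<Sigma>" and j: "j \<le> d + 1"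
    and w: "strict_mono_on {..2*d+2} w" and range: "w ` {..2*d+2} \<subseteq> {1..m}"
    and odd_in: "\<And>k. k \<le> 2*d+2 \<Longrightarrow> odd k \<Longrightarrow> w k \<in> A \<union> \<Sigma>"
    and even_in: "\<And>k. k \<le> 2*d+2 \<Longrightarrow> even k \<Longrightarrow> w k \<in> u ` {..2*d+2} - {u (2*j)}"
  shows False
proof -
  let ?C = "(\<lambda>i. w (2*i+1)) ` {..d}"
  have "?C \<in> nu m d" using w range by (rule odd_entries_in_nu)
  moreover have "?C \<subseteq> A \<union> \<Sigma>"
  proof (rule image_subsetI)
    fix i assume "i \<in> {..d}"
    then show "w (2*i+1) \<in> A \<union> \<Sigma>" using odd_in[of "2*i+1"] by simp
  qed
  ultimately have "?C \<in> simp_of m d T" using supp unfolding is_support_def by blast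
  then obtain S where S: "S \<in> T" "?C \<subseteq> S" unfolding simp_of_def by blast
  show False
  proof (rule alternating_points_not_in_two_simplices[OF triangulation t_mono _ _ S(1) facet_in_T[OF j]])
    show "strict_mono_on {..2*d+1+1} w" "w ` {..2*d+1+1} \<subseteq> {1..m}" using w range by simp_all
    show "w k \<in> S" if "k \<le> 2*d+1+1" "odd k" for k
    proof -
      from \<open>odd k\<close> obtain i where "k = 2*i+1" by (blast elim: oddE)
      with that S(2) show ?thesis by auto
    qed
    show "w k \<in> u ` {..2*d+2} - {u (2*j)}" if "k \<le> 2*d+1+1" "even k" for k
      using even_in that by simp
  qed
qed

text \<open>The alternating sequence is \<open>u\<close> with b_i deleted and \<sigma> inserted:
  b_0, a_0, ..., b_{i-1}, a_{i-1}, a_i, \<sigma>, b_{i+1}, a_{i+1}, ..., b_{d+1}.\<close>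
lemma no_support_entry_between_a_b:
  assumes supp: "is_support m d (simp_of m d T) A \<Sigma>" and "\<sigma> \<in> \<Sigma>" "i \<le> d"
    and "u (2*i+1) < \<sigma>" "\<sigma> < u (2*i+2)"
  shows False
proof (rule support_excludes_alternating[OF supp, of i "u(2*i := u (2*i+1), 2*i+1 := \<sigma>)"])
  let ?w = "u(2*i := u (2*i+1), 2*i+1 := \<sigma>)"
  show "i \<le> d + 1" using assms by simp
  show "strict_mono_on {..2*d+2} ?w"
  proof (rule strict_mono_on_atMostI)
    fix k assume "k < 2*d+2"
    then show "?w k < ?w (Suc k)"
      using assms u_less[of k "Suc k"] u_less[of k "2*i+1"] by auto
  qed
  have "\<sigma> \<in> {1..m}" using u_range[of "2*i+1"] u_range[of "2*i+2"] assms by auto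
  then show "?w ` {..2*d+2} \<subseteq> {1..m}" using assms u_range by (auto simp: image_subset_iff)
  show "?w k \<in> A \<union> \<Sigma>" if "k \<le> 2*d+2" "odd k" for k
    using that assms u_odd_in_A by auto
  show "?w k \<in> u ` {..2*d+2} - {u (2*i)}" if "k \<le> 2*d+2" "even k" for k
    using that assms u_eq_iff by auto
qed

text \<open>The alternating sequence is \<open>u\<close> with b_{i+2} deleted and \<sigma> inserted:
  b_0, a_0, ..., b_{i+1}, \<sigma>, a_{i+1}, a_{i+2}, b_{i+3}, ..., b_{d+1}.\<close>
lemma no_support_entry_between_b_a:
  assumes supp: "is_support m d (simp_of m d T) A \<Sigma>" and "\<sigma> \<in> \<Sigma>" "i < d"
    and "u (2*i+2) < \<sigma>" "\<sigma> < u (2*i+3)"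
  shows False
proof (rule support_excludes_alternating[OF supp, of "i+2" "u(2*i+3 := \<sigma>, 2*i+4 := u (2*i+3))"])
  let ?w = "u(2*i+3 := \<sigma>, 2*i+4 := u (2*i+3))"
  show "i + 2 \<le> d + 1" using assms by simp
  show "strict_mono_on {..2*d+2} ?w"
  proof (rule strict_mono_on_atMostI)
    fix k assume "k < 2*d+2"
    then show "?w k < ?w (Suc k)"
      using assms u_less[of k "Suc k"] u_less[of "2*i+3" "Suc (2*i+4)"] by auto
  qed
  have "\<sigma> \<in> {1..m}" using u_range[of "2*i+2"] u_range[of "2*i+3"] assms by auto
  then show "?w ` {..2*d+2} \<subseteq> {1..m}" using assms u_range by (auto simp: image_subset_iff)
  show "?w k \<in> A \<union> \<Sigma>" if "k \<le> 2*d+2" "odd k" for k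
    using that assms u_odd_in_A by auto
  show "?w k \<in> u ` {..2*d+2} - {u (2*(i+2))}" if "k \<le> 2*d+2" "even k" for k
    using that assms u_eq_iff by auto
qed

lemma support_unique:
  assumes supp: "is_support m d (simp_of m d T) A \<Sigma>"
  shows "\<Sigma> = (\<lambda>i. u (2*i+2)) ` {..<d}"
proof -
  have card: "card \<Sigma> = d" and wr: "wr \<Sigma> A" using supp unfolding is_support_def by auto
  then have "finite \<Sigma>" unfolding wr_def by simp
  define \<sigma> where "\<sigma> i = sorted_list_of_set \<Sigma> ! i" for i
  have \<Sigma>_eq: "\<sigma> ` {..<d} = \<Sigma>"
    using image_nth_sorted_list_of_set[OF \<open>finite \<Sigma>\<close>] card by (simp add: \<sigma>_def)
  have "\<sigma> i = u (2*i+2)" if "i < d" for i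
  proof -
    have between: "u (2*i+1) < \<sigma> i" "\<sigma> i < u (2*i+3)"
      using wr that card unfolding wr_def \<sigma>_def interleave_def by auto
    have "\<sigma> i \<in> \<Sigma>" using that \<Sigma>_eq by blast
    show ?thesis
    proof (cases "\<sigma> i" "u (2*i+2)" rule: linorder_cases)
      case less
      then show ?thesis
        using no_support_entry_between_a_b[OF supp \<open>\<sigma> i \<in> \<Sigma>\<close>, of i] between that by simp
    next
      case greater
      then show ?thesis
        using no_support_entry_between_b_a[OF supp \<open>\<sigma> i \<in> \<Sigma>\<close>, of i] between that by simp
    qed
  qed
  then show ?thesis using \<Sigma>_eq by (auto intro!: image_cong)
qed

end

theorem lemma3p7:
  fixes t :: "nat \<Rightarrow> real" and m d :: nat and T :: "nat set set" and A B :: "nat set"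
  assumes "strict_mono_on {1..m} t"
    and "triangulation t (2*d+1) {1..m} T"
    and "mutable t m d T A B"
  shows "is_support m d (simp_of m d T) A (B - {Min B, Max B}) \<and>
         (\<forall>\<Sigma>. is_support m d (simp_of m d T) A \<Sigma> \<longrightarrow> \<Sigma> = B - {Min B, Max B})"
proof -
  interpret increasing_flip t m d T A B using assms by unfold_locales
  show ?thesis unfolding B_without_Min_Max using flip_support support_unique by blast
qed

end
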